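(* Let $c_2,c_3,a_0,a_1,a_2,b_0,b_1$ be constants, $\mu(t)=t^2+c_2t+c_3$, $\phi=a_0\mu(t)^2+a_1\mu(t)+a_2$, $\psi=b_0\mu(t)+b_1$, $\lambda_n=n((n-1)a_0+b_0)$, and $\operatorname{L}_n=\phi\,\mathbb{D}^2+\psi\,\mathbb{S}\mathbb{D}-\lambda_n I$. Assume that for each $n\ge0$ there is a unique monic polynomial $P_n$ of degree $n$ in $\mu(t)$ with $\operatorname{L}_n(P_n)=0$, and write $P_n=\vartheta_n+p_{1,n}\vartheta_{n-1}+p_{2,n}\vartheta_{n-2}+\cdots$. Then for each $n\ge1$ there exists $\beta_n$ such that the polynomial $$U_n=\operatorname{L}_{n+1}\big((\mu(t)-\beta_n)P_n\big)$$ has degree $n-1$ in $\mu(t)$; moreover $$\beta_n=p_{1,n}+f_n+\frac{k_{1,n+1}}{\lambda_n-\lambda_{n+1}},$$ and $U_n=t_n\vartheta_{n-1}+(\text{lower terms in the basis }\vartheta_k)$ with $$t_n=k_{2,n+1}+(f_n+p_{1,n}-\beta_n)k_{1,n}+(p_{1,n}f_{n-1}+p_{2,n}-\beta_np_{1,n})(\lambda_{n-1}-\lambda_{n+1}).$$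
   Context: Operators: $\mathbb{D}f(t)=\frac{f(t+1/2)-f(t-1/2)}{\mu(t+1/2)-\mu(t-1/2)}$ and $\mathbb{S}f(t)=\frac{f(t+1/2)+f(t-1/2)}{2}$, acting on polynomials in $\mu(t)$ (degree lowered by one, resp. preserved). Basis: $\vartheta_n(t)=(-4)^{-n}(2t+1/2+c_2)_n(-2t+1/2-c_2)_n$ (Pochhammer symbols), $\vartheta_k=0$ for $k<0$; $\vartheta_n$ is monic of degree $n$ in $\mu(t)$ and satisfies $\mathbb{D}\vartheta_n=n\vartheta_{n-1}$, $\mu(t)\vartheta_n=\vartheta_{n+1}+f_n\vartheta_n$, $\mathbb{S}\vartheta_n=\vartheta_n+g_n\vartheta_{n-1}$, where $f_n=-\frac{c_2^2}{4}+\frac{(2n+1)^2}{16}+c_3$ and $g_n=\frac{n(2n-1)}{4}$. The constants $k_{1,j},k_{2,j}$ are $k_{1,j}=a_0j(j-1)(f_{j-1}+f_{j-2})+b_0jf_{j-1}+a_1j(j-1)+b_0jg_{j-1}+b_1j$, $k_{2,j}=a_0j(j-1)f_{j-2}^2+a_1j(j-1)f_{j-2}+b_0jg_{j-1}f_{j-2}+a_2j(j-1)+b_1jg_{j-1}$; they are such that $\operatorname{L}_n(\vartheta_j)=(a_0j(j-1)+b_0j-\lambda_n)\vartheta_j+k_{1,j}\vartheta_{j-1}+k_{2,j}\vartheta_{j-2}$. *)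

theory Defs
  imports "HOL-Computational_Algebra.Polynomial"
begin

text \<open>Everything is over the reals. Polynomials in mu(t) are represented as
  real polynomials in a formal variable standing for mu(t); the polynomial q
  represents the function t \<mapsto> poly q (mu t).\<close>

definition mu :: "real \<Rightarrow> real \<Rightarrow> real \<Rightarrow> real" where
  "mu c2 c3 t = t^2 + c2 * t + c3"

definition Dop :: "real \<Rightarrow> real \<Rightarrow> real poly \<Rightarrow> real poly" where
  "Dop c2 c3 p = (THE q. \<forall>t. mu c2 c3 (t + 1/2) \<noteq> mu c2 c3 (t - 1/2) \<longrightarrow>
     poly q (mu c2 c3 t) =
       (poly p (mu c2 c3 (t + 1/2)) - poly p (mu c2 c3 (t - 1/2))) /
       (mu c2 c3 (t + 1/2) - mu c2 c3 (t - 1/2)))"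

definition Sop :: "real \<Rightarrow> real \<Rightarrow> real poly \<Rightarrow> real poly" where
  "Sop c2 c3 p = (THE q. \<forall>t.
     poly q (mu c2 c3 t) = (poly p (mu c2 c3 (t + 1/2)) + poly p (mu c2 c3 (t - 1/2))) / 2)"

definition theta :: "real \<Rightarrow> real \<Rightarrow> nat \<Rightarrow> real poly" where
  "theta c2 c3 n = (THE q. \<forall>t. poly q (mu c2 c3 t) =
     inverse ((-4) ^ n) * pochhammer (2*t + 1/2 + c2) n * pochhammer (-2*t + 1/2 - c2) n)"

definition theta_coords :: "real \<Rightarrow> real \<Rightarrow> real poly \<Rightarrow> nat \<Rightarrow> real" where
  "theta_coords c2 c3 p = (THE c. (\<forall>k>degree p. c k = 0) \<and>
      p = (\<Sum>k\<le>degree p. smult (c k) (theta c2 c3 k)))"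

text \<open>Coordinate with integer index; coordinates at negative indices are 0
  (vartheta_k = 0 for k < 0).\<close>
definition pc :: "real \<Rightarrow> real \<Rightarrow> real poly \<Rightarrow> int \<Rightarrow> real" where
  "pc c2 c3 p k = (if k < 0 then 0 else theta_coords c2 c3 p (nat k))"

definition fcoef :: "real \<Rightarrow> real \<Rightarrow> int \<Rightarrow> real" where
  "fcoef c2 c3 n = - (c2^2) / 4 + (2 * of_int n + 1)^2 / 16 + c3"

definition gcoef :: "int \<Rightarrow> real" where
  "gcoef n = of_int n * (2 * of_int n - 1) / 4"

definition lam :: "real \<Rightarrow> real \<Rightarrow> int \<Rightarrow> real" where
  "lam a0 b0 n = of_int n * ((of_int n - 1) * a0 + b0)"

definition k1 :: "real \<Rightarrow> real \<Rightarrow> real \<Rightarrow> real \<Rightarrow> real \<Rightarrow> real \<Rightarrow> int \<Rightarrow> real" where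
  "k1 c2 c3 a0 a1 b0 b1 j =
     a0 * of_int j * (of_int j - 1) * (fcoef c2 c3 (j - 1) + fcoef c2 c3 (j - 2))
     + b0 * of_int j * fcoef c2 c3 (j - 1) + a1 * of_int j * (of_int j - 1)
     + b0 * of_int j * gcoef (j - 1) + b1 * of_int j"

definition k2 :: "real \<Rightarrow> real \<Rightarrow> real \<Rightarrow> real \<Rightarrow> real \<Rightarrow> real \<Rightarrow> real \<Rightarrow> int \<Rightarrow> real" where
  "k2 c2 c3 a0 a1 a2 b0 b1 j =
     a0 * of_int j * (of_int j - 1) * (fcoef c2 c3 (j - 2))^2
     + a1 * of_int j * (of_int j - 1) * fcoef c2 c3 (j - 2)
     + b0 * of_int j * gcoef (j - 1) * fcoef c2 c3 (j - 2)
     + a2 * of_int j * (of_int j - 1) + b1 * of_int j * gcoef (j - 1)"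

definition Lop :: "real \<Rightarrow> real \<Rightarrow> real \<Rightarrow> real \<Rightarrow> real \<Rightarrow> real \<Rightarrow> real \<Rightarrow> nat \<Rightarrow> real poly \<Rightarrow> real poly" where
  "Lop c2 c3 a0 a1 a2 b0 b1 n p =
     [:a2, a1, a0:] * Dop c2 c3 (Dop c2 c3 p)
     + [:b1, b0:] * Sop c2 c3 (Dop c2 c3 p)
     - smult (lam a0 b0 (int n)) p"

end

theory Submission
  imports Defs
begin

text \<open>In the basis \<open>\<theta>\<^sub>k = \<Prod>\<^sub>j\<^sub><\<^sub>k (\<mu> - f\<^sub>j)\<close> all operators involved act by short
  recurrences: multiplication by \<open>\<mu> - \<beta>\<close> raises the index by at most one, and \<open>L\<^sub>N\<close>
  lowers it by at most two, with coefficients \<open>\<lambda>\<^sub>k - \<lambda>\<^sub>N\<close>, \<open>k\<^sub>1\<^sub>,\<^sub>k\<close>, \<open>k\<^sub>2\<^sub>,\<^sub>k\<close>.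
  Hence the \<open>\<theta>\<close>-coordinates of \<open>U\<^sub>n = L\<^sub>n\<^sub>+\<^sub>1((\<mu> - \<beta>) P\<^sub>n)\<close> at \<open>n + 1\<close>, \<open>n\<close>, \<open>n - 1\<close>
  are explicit in \<open>\<beta>\<close>, \<open>p\<^sub>1\<^sub>,\<^sub>n\<close>, \<open>p\<^sub>2\<^sub>,\<^sub>n\<close>. The one at \<open>n + 1\<close> vanishes identically, and
  the one at \<open>n\<close> is affine in \<open>\<beta>\<close> with slope \<open>\<lambda>\<^sub>n\<^sub>+\<^sub>1 - \<lambda>\<^sub>n\<close>, which is nonzero
  because eigenpolynomials are unique; so exactly one \<open>\<beta>\<close> lowers the degree to \<open>n - 1\<close>.\<close>

section \<open>Coordinates with respect to a monic basis\<close>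

lemma smult_sum_right: "smult c (\<Sum>i\<in>A. f i) = (\<Sum>i\<in>A. smult c (f i))"
  by (induction A rule: infinite_finite_induct) (simp_all add: smult_add_right)

locale monic_basis =
  fixes b :: "nat \<Rightarrow> 'a::comm_ring_1 poly"
  assumes degree_basis [simp]: "degree (b k) = k"
    and lead_coeff_basis [simp]: "lead_coeff (b k) = 1"
begin

definition coords :: "'a poly \<Rightarrow> nat \<Rightarrow> 'a" where
  "coords p = (THE c. (\<forall>k>degree p. c k = 0) \<and> p = (\<Sum>k\<le>degree p. smult (c k) (b k)))"

lemma coeff_basis_self [simp]: "coeff (b k) k = 1"
  using lead_coeff_basis[of k] by simp

lemma basis_0 [simp]: "b 0 = 1"
  using degree_basis[of 0] coeff_basis_self[of 0] by (metis degree_0_id one_pCons)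

lemma coeff_sum_basis_top: "coeff (\<Sum>k\<le>N. smult (a k) (b k)) N = a N"
proof -
  have "coeff (\<Sum>k\<le>N. smult (a k) (b k)) N = (\<Sum>k\<le>N. if k = N then a k else 0)"
    unfolding coeff_sum by (intro sum.cong) (auto simp: coeff_eq_0)
  then show ?thesis by simp
qed

lemma degree_sum_basis_le: "degree (\<Sum>k\<le>N. smult (a k) (b k)) \<le> N"
  by (rule degree_sum_le) (auto intro: order.trans[OF degree_smult_le])

lemma sum_basis_eq_0_imp: "(\<Sum>k\<le>N. smult (a k) (b k)) = 0 \<Longrightarrow> k \<le> N \<Longrightarrow> a k = 0"
proof (induction N)
  case (Suc N)
  have "a (Suc N) = 0"
    using coeff_sum_basis_top[of a "Suc N"] Suc.prems(1) by (metis coeff_0)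
  with Suc show ?case by (auto simp: le_Suc_eq)
qed simp

lemma sum_basis_mono_neutral:
  "\<forall>k>N. a k = 0 \<Longrightarrow> N \<le> M \<Longrightarrow>
     (\<Sum>k\<le>M. smult (a k) (b k)) = (\<Sum>k\<le>N. smult (a k) (b k))"
  by (intro sum.mono_neutral_right) auto

lemma basis_coefficients_unique:
  assumes "\<forall>k>N. a k = 0" "\<forall>k>N. a' k = 0"
    and "(\<Sum>k\<le>N. smult (a k) (b k)) = (\<Sum>k\<le>N. smult (a' k) (b k))"
  shows "a = a'"
proof
  fix k
  have "(\<Sum>k\<le>N. smult (a k - a' k) (b k)) = 0"
    using assms(3) by (simp add: smult_diff_left sum_subtractf)
  then show "a k = a' k"
    using sum_basis_eq_0_imp[of "\<lambda>k. a k - a' k" N k] assms(1,2)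
    by (cases "k \<le> N") auto
qed

lemma basis_expansion_exists:
  "\<exists>a. (\<forall>k>degree p. a k = 0) \<and> p = (\<Sum>k\<le>degree p. smult (a k) (b k))"
proof (induction "degree p" arbitrary: p rule: less_induct)
  case less
  show ?case
  proof (cases "degree p = 0")
    case True
    then obtain c where "p = [:c:]" by (metis degree_eq_zeroE)
    with True show ?thesis by (intro exI[of _ "\<lambda>k. if k = 0 then c else 0"]) auto
  next
    case False
    define d where "d = degree p"
    define r where "r = p - smult (lead_coeff p) (b d)"
    have "degree r \<le> d" "coeff r d = 0"
      unfolding r_def d_def by (auto intro!: degree_diff_le order.trans[OF degree_smult_le])
    with False d_def have "degree r < d"
      by (metis le_neq_implies_less leading_coeff_0_iff degree_0)
    then obtain a where a: "\<forall>k>degree r. a k = 0" "r = (\<Sum>k\<le>degree r. smult (a k) (b k))"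
      using less d_def by blast
    obtain d' where d': "d = Suc d'" using False d_def not0_implies_Suc by blast
    define a' where "a' = a(d := lead_coeff p)"
    have "(\<Sum>k\<le>d'. smult (a' k) (b k)) = (\<Sum>k\<le>d'. smult (a k) (b k))"
      using d' by (intro sum.cong) (auto simp: a'_def)
    also have "\<dots> = r"
      using a \<open>degree r < d\<close> d' sum_basis_mono_neutral[of "degree r" a d'] by simp
    finally have "(\<Sum>k\<le>d'. smult (a' k) (b k)) = r" .
    then have "p = (\<Sum>k\<le>d. smult (a' k) (b k))"
      by (simp add: d' r_def a'_def)
    moreover have "\<forall>k>d. a' k = 0" using a(1) \<open>degree r < d\<close> by (auto simp: a'_def)
    ultimately show ?thesis unfolding d_def by blast
  qed
qed

lemma coords_eqI:
  assumes p: "p = (\<Sum>k\<le>N. smult (a k) (b k))" and a: "\<forall>k>N. a k = 0"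
  shows "coords p = a"
proof -
  have deg: "degree p \<le> N" using p degree_sum_basis_le by simp
  have unique: "c = a" if "\<forall>k>degree p. c k = 0" "p = (\<Sum>k\<le>degree p. smult (c k) (b k))" for c
  proof (rule basis_coefficients_unique[of N])
    show "\<forall>k>N. c k = 0" using that(1) deg by auto
    then show "(\<Sum>k\<le>N. smult (c k) (b k)) = (\<Sum>k\<le>N. smult (a k) (b k))"
      using that(2) p sum_basis_mono_neutral[OF that(1) deg] by metis
  qed (use a in simp)
  obtain e where "\<forall>k>degree p. e k = 0" "p = (\<Sum>k\<le>degree p. smult (e k) (b k))"
    using basis_expansion_exists by blast
  then show ?thesis
    unfolding coords_def using unique by (intro the_equality) blast+
qed

lemma coords_eq_0: "degree p < k \<Longrightarrow> coords p k = 0"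
  and coords_expansion: "p = (\<Sum>k\<le>degree p. smult (coords p k) (b k))"
proof -
  obtain a where a: "\<forall>k>degree p. a k = 0" "p = (\<Sum>k\<le>degree p. smult (a k) (b k))"
    using basis_expansion_exists by blast
  with coords_eqI[OF a(2) a(1)]
  show "degree p < k \<Longrightarrow> coords p k = 0" "p = (\<Sum>k\<le>degree p. smult (coords p k) (b k))"
    by auto
qed

lemma coords_expansion_le:
  assumes "degree p \<le> N" shows "p = (\<Sum>k\<le>N. smult (coords p k) (b k))"
  using assms coords_expansion[of p] sum_basis_mono_neutral[of "degree p" "coords p" N]
  by (simp add: coords_eq_0)

lemma coords_add: "coords (p + q) k = coords p k + coords q k"
proof -
  define N where "N = max (degree p) (degree q)"
  have "p + q = (\<Sum>k\<le>N. smult (coords p k + coords q k) (b k))"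
    using coords_expansion_le[of p N] coords_expansion_le[of q N]
    by (simp add: N_def smult_add_left sum.distrib)
  then have "coords (p + q) = (\<lambda>k. coords p k + coords q k)"
    by (rule coords_eqI) (simp add: N_def coords_eq_0)
  then show ?thesis by simp
qed

lemma coords_smult: "coords (smult c p) k = c * coords p k"
proof -
  have "smult c p = (\<Sum>k\<le>degree p. smult (c * coords p k) (b k))"
    using arg_cong[OF coords_expansion[of p], of "smult c"] by (simp add: smult_sum_right)
  then have "coords (smult c p) = (\<lambda>k. c * coords p k)"
    by (rule coords_eqI) (simp add: coords_eq_0)
  then show ?thesis by simp
qed

lemma coords_0 [simp]: "coords 0 k = 0"
  using coords_smult[of 0 0] by simp

lemma coords_diff: "coords (p - q) k = coords p k - coords q k"
  using coords_add[of p "smult (-1) q"] coords_smult[of "-1" q] by simp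

lemma coords_sum: "coords (\<Sum>i\<in>A. f i) k = (\<Sum>i\<in>A. coords (f i) k)"
  by (induction A rule: infinite_finite_induct) (simp_all add: coords_add)

lemma coords_basis: "coords (b j) k = (if k = j then 1 else 0)"
proof -
  have "b j = (\<Sum>k\<le>j. smult (if k = j then 1 else 0) (b k))"
    by (simp add: if_distrib[of "\<lambda>c. smult c _"] cong: if_cong)
  then have "coords (b j) = (\<lambda>k. if k = j then 1 else 0)"
    by (rule coords_eqI) simp
  then show ?thesis by simp
qed

lemma coords_inject: "(\<And>k. coords p k = coords q k) \<Longrightarrow> p = q"
  using coords_expansion[of "p - q"] by (simp add: coords_diff)

lemma coords_degree: "coords p (degree p) = lead_coeff p"
  using coeff_sum_basis_top[of "coords p" "degree p"] coords_expansion[of p] by simp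

lemma degree_le_iff_coords: "degree p \<le> d \<longleftrightarrow> (\<forall>k>d. coords p k = 0)"
proof
  assume above: "\<forall>k>d. coords p k = 0"
  show "degree p \<le> d"
  proof (rule ccontr)
    assume "\<not> degree p \<le> d"
    then have "lead_coeff p = 0" using above coords_degree[of p] by simp
    with \<open>\<not> degree p \<le> d\<close> show False by simp
  qed
qed (simp add: coords_eq_0)

end

section \<open>The basis \<open>\<theta>\<close>\<close>

text \<open>\<open>theta_val n (2 t + c2)\<close> is the value of \<open>\<theta>\<^sub>n\<close> at \<open>\<mu>(t)\<close>; the shifts
  \<open>t \<plusminus> 1/2\<close> become \<open>s \<plusminus> 1\<close>.\<close>
definition theta_val :: "nat \<Rightarrow> real \<Rightarrow> real" where
  "theta_val n s = (\<Prod>k<n. s\<^sup>2 / 4 - (2 * real k + 1)\<^sup>2 / 16)"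

lemma theta_val_Suc: "theta_val (Suc n) s = theta_val n s * (s\<^sup>2 / 4 - (2 * real n + 1)\<^sup>2 / 16)"
  by (simp add: theta_val_def)

lemma theta_val_shift:
  "theta_val (Suc n) (s + 1) - theta_val (Suc n) (s - 1) = (real n + 1) * s * theta_val n s \<and>
   theta_val (Suc n) (s + 1) + theta_val (Suc n) (s - 1)
     = 2 * theta_val (Suc n) s + (real n + 1) * (2 * real n + 1) / 2 * theta_val n s"
proof (induction n)
  case 0
  show ?case unfolding theta_val_def by (simp add: power2_eq_square field_simps)
next
  case (Suc n)
  have plus: "theta_val (Suc n) (s + 1) = theta_val (Suc n) s
      + (real n + 1) * (2 * real n + 1) / 4 * theta_val n s + (real n + 1) * s / 2 * theta_val n s"
    and minus: "theta_val (Suc n) (s - 1) = theta_val (Suc n) s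
      + (real n + 1) * (2 * real n + 1) / 4 * theta_val n s - (real n + 1) * s / 2 * theta_val n s"
    using Suc.IH by (simp_all add: field_simps)
  show ?case
    by (simp only: theta_val_Suc[of "Suc n"] plus minus) (simp add: theta_val_Suc field_simps power2_eq_square)
qed

lemma mu_shift: "mu c2 c3 (t + 1/2) - mu c2 c3 (t - 1/2) = 2 * t + c2"
  by (simp add: mu_def power2_eq_square algebra_simps)

text \<open>The points where \<open>2 t + c2\<close> is a positive integer give infinitely many distinct values
  of \<open>\<mu>\<close>, hence infinitely many roots of \<open>p - q\<close>.\<close>
lemma poly_eq_on_mu:
  assumes "\<And>t. 2 * t + c2 \<noteq> 0 \<Longrightarrow> poly p (mu c2 c3 t) = poly q (mu c2 c3 t)"
  shows "p = q"
proof (rule ccontr)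
  assume "p \<noteq> q"
  then have fin: "finite {x. poly (p - q) x = 0}" by (intro poly_roots_finite) simp
  define g where "g m = mu c2 c3 ((real m + 1 - c2) / 2)" for m :: nat
  have g: "g m = (real m + 1)\<^sup>2 / 4 + c3 - c2\<^sup>2 / 4" for m
    by (simp add: g_def mu_def power2_eq_square field_simps)
  have "inj g"
    by (rule injI) (simp add: g power2_eq_iff)
  moreover have "poly p (g m) = poly q (g m)" for m
  proof -
    have "2 * ((real m + 1 - c2) / 2) + c2 \<noteq> 0" by (simp add: field_simps)
    then show ?thesis using assms by (simp add: g_def)
  qed
  then have "range g \<subseteq> {x. poly (p - q) x = 0}" by auto
  ultimately show False
    using fin finite_subset finite_imageD by (metis infinite_UNIV_nat)
qed

lemma poly_prod_linear_mu:
  "poly (\<Prod>k<n. [:- fcoef c2 c3 (int k), 1:]) (mu c2 c3 t) = theta_val n (2 * t + c2)"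
  unfolding theta_val_def poly_prod
  by (rule prod.cong) (auto simp: mu_def fcoef_def power2_eq_square field_simps)

lemma pochhammer_theta_val:
  "inverse ((-4) ^ n) * pochhammer (2*t + 1/2 + c2) n * pochhammer (-2*t + 1/2 - c2) n
     = theta_val n (2 * t + c2)"
proof -
  have "theta_val n (2 * t + c2)
      = (\<Prod>k<n. inverse (-4) * ((2*t + 1/2 + c2 + real k) * (-2*t + 1/2 - c2 + real k)))"
    unfolding theta_val_def by (rule prod.cong) (auto simp: power2_eq_square field_simps)
  also have "\<dots> = inverse (-4) ^ n * ((\<Prod>k<n. 2*t + 1/2 + c2 + real k) * (\<Prod>k<n. -2*t + 1/2 - c2 + real k))"
    by (simp only: prod.distrib prod_constant card_lessThan)
  also have "\<dots> = inverse ((-4) ^ n) * pochhammer (2*t + 1/2 + c2) n * pochhammer (-2*t + 1/2 - c2) n"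
    using power_inverse[of "-4::real" n] by (simp add: pochhammer_prod atLeast0LessThan mult.assoc)
  finally show ?thesis ..
qed

lemma theta_eq_prod: "theta c2 c3 n = (\<Prod>k<n. [:- fcoef c2 c3 (int k), 1:])"
  unfolding theta_def
proof (rule the_equality)
  fix q assume "\<forall>t. poly q (mu c2 c3 t) =
     inverse ((-4) ^ n) * pochhammer (2*t + 1/2 + c2) n * pochhammer (-2*t + 1/2 - c2) n"
  then show "q = (\<Prod>k<n. [:- fcoef c2 c3 (int k), 1:])"
    using pochhammer_theta_val poly_prod_linear_mu by (intro poly_eq_on_mu[of c2 _ c3]) simp
qed (use pochhammer_theta_val poly_prod_linear_mu in simp)

lemma poly_theta_mu: "poly (theta c2 c3 n) (mu c2 c3 t) = theta_val n (2 * t + c2)"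
  by (simp add: theta_eq_prod poly_prod_linear_mu)

lemma theta_Suc: "theta c2 c3 (Suc n) = [:- fcoef c2 c3 (int n), 1:] * theta c2 c3 n"
  by (simp add: theta_eq_prod)

interpretation theta: monic_basis "theta c2 c3"
  rewrites "monic_basis.coords (theta c2 c3) = theta_coords c2 c3"
proof -
  show "monic_basis (theta c2 c3)"
  proof
    show "degree (theta c2 c3 k) = k" for k
      by (simp add: theta_eq_prod degree_prod_sum_eq)
    show "lead_coeff (theta c2 c3 k) = 1" for k
      unfolding theta_eq_prod lead_coeff_prod by simp
  qed
  then show "monic_basis.coords (theta c2 c3) = theta_coords c2 c3"
    by (simp add: monic_basis.coords_def theta_coords_def fun_eq_iff)
qed

section \<open>The operators \<open>D\<close> and \<open>S\<close>\<close>

text \<open>The relations defining \<open>Dop\<close> and \<open>Sop\<close>, with the division by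
  \<open>\<mu>(t + 1/2) - \<mu>(t - 1/2) = 2 t + c2\<close> cleared.\<close>
definition is_divdiff :: "real \<Rightarrow> real \<Rightarrow> real poly \<Rightarrow> real poly \<Rightarrow> bool" where
  "is_divdiff c2 c3 p q \<longleftrightarrow> (\<forall>t. 2 * t + c2 \<noteq> 0 \<longrightarrow>
     poly q (mu c2 c3 t) * (2 * t + c2) = poly p (mu c2 c3 (t + 1/2)) - poly p (mu c2 c3 (t - 1/2)))"

definition is_average :: "real \<Rightarrow> real \<Rightarrow> real poly \<Rightarrow> real poly \<Rightarrow> bool" where
  "is_average c2 c3 p q \<longleftrightarrow> (\<forall>t.
     poly q (mu c2 c3 t) = (poly p (mu c2 c3 (t + 1/2)) + poly p (mu c2 c3 (t - 1/2))) / 2)"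

lemma is_divdiff_unique: "is_divdiff c2 c3 p q \<Longrightarrow> is_divdiff c2 c3 p r \<Longrightarrow> q = r"
  unfolding is_divdiff_def by (intro poly_eq_on_mu[of c2 _ c3]) (metis mult_right_cancel)

lemma is_average_unique: "is_average c2 c3 p q \<Longrightarrow> is_average c2 c3 p r \<Longrightarrow> q = r"
  unfolding is_average_def by (intro poly_eq_on_mu[of c2 _ c3]) metis

lemma Dop_eqI:
  assumes "is_divdiff c2 c3 p q" shows "Dop c2 c3 p = q"
proof -
  have mu_shift_eq_iff: "mu c2 c3 (t + 1/2) = mu c2 c3 (t - 1/2) \<longleftrightarrow> 2 * t + c2 = 0" for t
    using mu_shift[of c2 c3 t] by linarith
  have divide_iff: "(d \<noteq> 0 \<longrightarrow> x = y / d) \<longleftrightarrow> (d \<noteq> 0 \<longrightarrow> x * d = y)" for d x y :: real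
    by (auto simp: field_simps)
  have "(\<forall>t. mu c2 c3 (t + 1/2) \<noteq> mu c2 c3 (t - 1/2) \<longrightarrow> poly r (mu c2 c3 t) =
      (poly p (mu c2 c3 (t + 1/2)) - poly p (mu c2 c3 (t - 1/2))) / (mu c2 c3 (t + 1/2) - mu c2 c3 (t - 1/2)))
    \<longleftrightarrow> is_divdiff c2 c3 p r" for r
    unfolding is_divdiff_def by (simp only: mu_shift mu_shift_eq_iff divide_iff)
  then show ?thesis
    unfolding Dop_def using assms is_divdiff_unique by (intro the_equality) blast+
qed

lemma Sop_eqI:
  assumes "is_average c2 c3 p q" shows "Sop c2 c3 p = q"
  unfolding Sop_def
proof (rule the_equality)
  fix r
  assume "\<forall>t. poly r (mu c2 c3 t) = (poly p (mu c2 c3 (t + 1/2)) + poly p (mu c2 c3 (t - 1/2))) / 2"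
  then show "r = q" using is_average_unique[OF assms] unfolding is_average_def by blast
qed (fact assms[unfolded is_average_def])

lemma is_divdiff_add:
  "is_divdiff c2 c3 p q \<Longrightarrow> is_divdiff c2 c3 p' q' \<Longrightarrow> is_divdiff c2 c3 (p + p') (q + q')"
  unfolding is_divdiff_def by (simp add: distrib_right)

lemma is_divdiff_smult: "is_divdiff c2 c3 p q \<Longrightarrow> is_divdiff c2 c3 (smult c p) (smult c q)"
  unfolding is_divdiff_def by (simp add: mult.assoc right_diff_distrib)

lemma is_divdiff_sum:
  "(\<And>k. k \<in> A \<Longrightarrow> is_divdiff c2 c3 (p k) (q k)) \<Longrightarrow> is_divdiff c2 c3 (\<Sum>k\<in>A. p k) (\<Sum>k\<in>A. q k)"
proof (induction A rule: infinite_finite_induct)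
  case (insert x F)
  then show ?case by (simp add: is_divdiff_add)
qed (simp_all add: is_divdiff_def)

lemma is_average_add:
  "is_average c2 c3 p q \<Longrightarrow> is_average c2 c3 p' q' \<Longrightarrow> is_average c2 c3 (p + p') (q + q')"
  unfolding is_average_def by (simp add: field_simps)

lemma is_average_smult: "is_average c2 c3 p q \<Longrightarrow> is_average c2 c3 (smult c p) (smult c q)"
  unfolding is_average_def by (simp add: field_simps)

lemma is_average_sum:
  "(\<And>k. k \<in> A \<Longrightarrow> is_average c2 c3 (p k) (q k)) \<Longrightarrow> is_average c2 c3 (\<Sum>k\<in>A. p k) (\<Sum>k\<in>A. q k)"
proof (induction A rule: infinite_finite_induct)
  case (insert x F)
  then show ?case by (simp add: is_average_add)
qed (simp_all add: is_average_def)

lemma is_divdiff_theta: "is_divdiff c2 c3 (theta c2 c3 j) (smult (real j) (theta c2 c3 (j - 1)))"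
proof (cases j)
  case (Suc n)
  have "theta_val (Suc n) (2 * t + c2 + 1) - theta_val (Suc n) (2 * t + c2 - 1)
      = (real n + 1) * (2 * t + c2) * theta_val n (2 * t + c2)" for t
    using theta_val_shift[of n "2 * t + c2"] by simp
  then show ?thesis
    unfolding is_divdiff_def by (simp add: Suc poly_theta_mu algebra_simps)
qed (simp add: is_divdiff_def)

lemma is_average_theta:
  "is_average c2 c3 (theta c2 c3 j) (theta c2 c3 j + smult (gcoef (int j)) (theta c2 c3 (j - 1)))"
proof (cases j)
  case (Suc n)
  have "theta_val (Suc n) (2 * t + c2 + 1) + theta_val (Suc n) (2 * t + c2 - 1)
      = 2 * theta_val (Suc n) (2 * t + c2) + (real n + 1) * (2 * real n + 1) / 2 * theta_val n (2 * t + c2)" for t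
    using theta_val_shift[of n "2 * t + c2"] by simp
  then show ?thesis
    unfolding is_average_def by (simp add: Suc poly_theta_mu gcoef_def algebra_simps)
qed (simp add: is_average_def gcoef_def)

lemma is_divdiff_Dop: "is_divdiff c2 c3 p (Dop c2 c3 p)"
proof -
  have "is_divdiff c2 c3 (\<Sum>k\<le>degree p. smult (theta_coords c2 c3 p k) (theta c2 c3 k))
      (\<Sum>k\<le>degree p. smult (theta_coords c2 c3 p k) (smult (real k) (theta c2 c3 (k - 1))))"
    by (intro is_divdiff_sum is_divdiff_smult is_divdiff_theta)
  from this[folded theta.coords_expansion] show ?thesis by (simp add: Dop_eqI)
qed

lemma is_average_Sop: "is_average c2 c3 p (Sop c2 c3 p)"
proof -
  have "is_average c2 c3 (\<Sum>k\<le>degree p. smult (theta_coords c2 c3 p k) (theta c2 c3 k))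
      (\<Sum>k\<le>degree p. smult (theta_coords c2 c3 p k)
         (theta c2 c3 k + smult (gcoef (int k)) (theta c2 c3 (k - 1))))"
    by (intro is_average_sum is_average_smult is_average_theta)
  from this[folded theta.coords_expansion] show ?thesis by (simp add: Sop_eqI)
qed

lemma Dop_add: "Dop c2 c3 (p + q) = Dop c2 c3 p + Dop c2 c3 q"
  by (intro Dop_eqI is_divdiff_add is_divdiff_Dop)

lemma Dop_smult: "Dop c2 c3 (smult c p) = smult c (Dop c2 c3 p)"
  by (intro Dop_eqI is_divdiff_smult is_divdiff_Dop)

lemma Dop_0 [simp]: "Dop c2 c3 0 = 0"
  using Dop_smult[of c2 c3 0 0] by simp

lemma Sop_add: "Sop c2 c3 (p + q) = Sop c2 c3 p + Sop c2 c3 q"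
  by (intro Sop_eqI is_average_add is_average_Sop)

lemma Sop_smult: "Sop c2 c3 (smult c p) = smult c (Sop c2 c3 p)"
  by (intro Sop_eqI is_average_smult is_average_Sop)

lemma Sop_0 [simp]: "Sop c2 c3 0 = 0"
  using Sop_smult[of c2 c3 0 0] by simp

lemma Dop_theta: "Dop c2 c3 (theta c2 c3 j) = smult (real j) (theta c2 c3 (j - 1))"
  by (intro Dop_eqI is_divdiff_theta)

lemma Sop_theta: "Sop c2 c3 (theta c2 c3 j) = theta c2 c3 j + smult (gcoef (int j)) (theta c2 c3 (j - 1))"
  by (intro Sop_eqI is_average_theta)

section \<open>The operator \<open>L\<close> in \<open>\<theta>\<close>-coordinates\<close>

lemma linear_mult_theta:
  "[:b1, b0:] * theta c2 c3 j
     = smult b0 (theta c2 c3 (Suc j)) + smult (b1 + b0 * fcoef c2 c3 (int j)) (theta c2 c3 j)"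
proof -
  have "[:b1, b0:] = smult b0 [:- fcoef c2 c3 (int j), 1:] + [:b1 + b0 * fcoef c2 c3 (int j):]"
    by simp
  then show ?thesis by (simp only: theta_Suc distrib_right mult_smult_left) simp
qed

lemma quadratic_mult_theta:
  "[:a2, a1, a0:] * theta c2 c3 j = smult a0 (theta c2 c3 (Suc (Suc j)))
     + smult (a1 + a0 * (fcoef c2 c3 (int j) + fcoef c2 c3 (int (Suc j)))) (theta c2 c3 (Suc j))
     + smult (a2 + a1 * fcoef c2 c3 (int j) + a0 * (fcoef c2 c3 (int j))\<^sup>2) (theta c2 c3 j)"
proof -
  define f g where "f = fcoef c2 c3 (int j)" and "g = fcoef c2 c3 (int (Suc j))"
  have "[:a2, a1, a0:] = smult a0 ([:- g, 1:] * [:- f, 1:]) + smult (a1 + a0 * (f + g)) [:- f, 1:]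
      + [:a2 + a1 * f + a0 * f\<^sup>2:]"
    by (simp add: algebra_simps power2_eq_square)
  then show ?thesis
    unfolding f_def g_def by (simp only: theta_Suc distrib_right mult_smult_left mult.assoc) simp
qed

lemma Lop_add:
  "Lop c2 c3 a0 a1 a2 b0 b1 N (p + q) = Lop c2 c3 a0 a1 a2 b0 b1 N p + Lop c2 c3 a0 a1 a2 b0 b1 N q"
  unfolding Lop_def Dop_add Sop_add by (simp add: algebra_simps smult_add_right)

lemma Lop_smult: "Lop c2 c3 a0 a1 a2 b0 b1 N (smult c p) = smult c (Lop c2 c3 a0 a1 a2 b0 b1 N p)"
  unfolding Lop_def Dop_smult Sop_smult by (simp add: algebra_simps smult_add_right smult_diff_right)

lemma Lop_sum: "Lop c2 c3 a0 a1 a2 b0 b1 N (\<Sum>i\<in>A. f i) = (\<Sum>i\<in>A. Lop c2 c3 a0 a1 a2 b0 b1 N (f i))"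
proof (induction A rule: infinite_finite_induct)
  case (insert x F)
  then show ?case by (simp add: Lop_add)
qed (use Lop_smult[of _ _ _ _ _ _ _ _ 0 0] in simp_all)

lemma Lop_shift:
  "Lop c2 c3 a0 a1 a2 b0 b1 N p
     = Lop c2 c3 a0 a1 a2 b0 b1 M p + smult (lam a0 b0 (int M) - lam a0 b0 (int N)) p"
  unfolding Lop_def by (simp add: algebra_simps smult_diff_left)

lemma Lop_theta:
  "Lop c2 c3 a0 a1 a2 b0 b1 N (theta c2 c3 j) =
      smult (lam a0 b0 (int j) - lam a0 b0 (int N)) (theta c2 c3 j)
    + smult (k1 c2 c3 a0 a1 b0 b1 (int j)) (theta c2 c3 (j - 1))
    + smult (k2 c2 c3 a0 a1 a2 b0 b1 (int j)) (theta c2 c3 (j - 2))"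
  (is "?L = ?R")
proof -
  consider "j = 0" | "j = 1" | m where "j = Suc (Suc m)"
    by (metis One_nat_def not0_implies_Suc)
  then show ?thesis
  proof cases
    case 1
    then show ?thesis
      using Dop_theta[of c2 c3 0] by (simp add: Lop_def lam_def k1_def k2_def)
  next
    case 2
    then have "?L = [:b1, b0:] * theta c2 c3 0 - smult (lam a0 b0 (int N)) (theta c2 c3 1)"
      using Dop_theta[of c2 c3 0] Sop_theta[of c2 c3 0]
      by (simp add: Lop_def Dop_theta gcoef_def del: theta.basis_0)
    also have "\<dots> = ?R"
      unfolding linear_mult_theta using 2
      by (intro theta.coords_inject[of c2 c3])
        (simp add: theta.coords_add theta.coords_diff theta.coords_smult theta.coords_basis
          lam_def k1_def k2_def gcoef_def del: theta.basis_0)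
    finally show ?thesis .
  next
    case 3
    have "?L = smult (real j * real (Suc m)) ([:a2, a1, a0:] * theta c2 c3 m)
        + smult (real j) ([:b1, b0:] * theta c2 c3 (Suc m))
        + smult (real j * gcoef (int (Suc m))) ([:b1, b0:] * theta c2 c3 m)
        - smult (lam a0 b0 (int N)) (theta c2 c3 j)"
      by (simp add: Lop_def Dop_theta Dop_smult Sop_smult Sop_theta 3 mult_smult_right
          distrib_left smult_add_right)
    also have "\<dots> = ?R"
      unfolding quadratic_mult_theta linear_mult_theta
      using 3
      by (intro theta.coords_inject[of c2 c3])
        (simp add: theta.coords_add theta.coords_diff theta.coords_smult theta.coords_basis,
         auto simp: lam_def k1_def k2_def gcoef_def fcoef_def power2_eq_square field_simps)
    finally show ?thesis .
  qed
qed

lemma coords_Lop_theta: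
  "theta_coords c2 c3 (Lop c2 c3 a0 a1 a2 b0 b1 N (theta c2 c3 j)) m =
      (if j = m then lam a0 b0 (int m) - lam a0 b0 (int N) else 0)
    + (if j = Suc m then k1 c2 c3 a0 a1 b0 b1 (int (Suc m)) else 0)
    + (if j = Suc (Suc m) then k2 c2 c3 a0 a1 a2 b0 b1 (int (Suc (Suc m))) else 0)"
proof -
  have "k1 c2 c3 a0 a1 b0 b1 0 = 0" "k2 c2 c3 a0 a1 a2 b0 b1 0 = 0" "k2 c2 c3 a0 a1 a2 b0 b1 1 = 0"
    by (simp_all add: k1_def k2_def gcoef_def)
  then show ?thesis
    by (cases j rule: nat.exhaust[case_product nat.exhaust])
      (auto simp: Lop_theta theta.coords_add theta.coords_smult theta.coords_basis
        simp del: theta.basis_0)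
qed

lemma coords_Lop:
  "theta_coords c2 c3 (Lop c2 c3 a0 a1 a2 b0 b1 N q) m =
      (lam a0 b0 (int m) - lam a0 b0 (int N)) * theta_coords c2 c3 q m
    + k1 c2 c3 a0 a1 b0 b1 (int (Suc m)) * theta_coords c2 c3 q (Suc m)
    + k2 c2 c3 a0 a1 a2 b0 b1 (int (Suc (Suc m))) * theta_coords c2 c3 q (Suc (Suc m))"
proof -
  define D where "D = max (degree q) (Suc (Suc m))"
  have "Lop c2 c3 a0 a1 a2 b0 b1 N q
      = (\<Sum>j\<le>D. smult (theta_coords c2 c3 q j) (Lop c2 c3 a0 a1 a2 b0 b1 N (theta c2 c3 j)))"
    by (subst theta.coords_expansion_le[of q D c2 c3]) (simp_all add: D_def Lop_sum Lop_smult)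
  moreover have "m \<le> D" "Suc m \<le> D" "Suc (Suc m) \<le> D" by (simp_all add: D_def)
  ultimately show ?thesis
    by (simp add: theta.coords_sum theta.coords_smult coords_Lop_theta distrib_left sum.distrib
        if_distrib[of "\<lambda>x. _ * x"] cong: if_cong)
qed

lemma coords_mult_linear:
  "theta_coords c2 c3 ([:- \<beta>, 1:] * p) m
     = (if m = 0 then 0 else theta_coords c2 c3 p (m - 1))
       + (fcoef c2 c3 (int m) - \<beta>) * theta_coords c2 c3 p m"
proof -
  define D where "D = max (degree p) m"
  have "[:- \<beta>, 1:] * p = (\<Sum>j\<le>D. smult (theta_coords c2 c3 p j)
      (theta c2 c3 (Suc j) + smult (fcoef c2 c3 (int j) - \<beta>) (theta c2 c3 j)))"
    by (subst theta.coords_expansion_le[of p D c2 c3])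
      (simp_all add: D_def sum_distrib_left linear_mult_theta[of "- \<beta>" 1, simplified])
  moreover have "m \<le> D" by (simp add: D_def)
  ultimately show ?thesis
    by (cases m) (simp_all add: theta.coords_sum theta.coords_add theta.coords_smult
        theta.coords_basis distrib_left sum.distrib if_distrib[of "\<lambda>x. _ * x"] cong: if_cong)
qed

lemma pc_mult_linear:
  "pc c2 c3 ([:- \<beta>, 1:] * p) k = pc c2 c3 p (k - 1) + (fcoef c2 c3 k - \<beta>) * pc c2 c3 p k"
proof (cases "k < 0")
  case False
  then obtain m where k: "k = int m" by (metis nonneg_int_cases not_less)
  define q where "q = [:- \<beta>, 1:] * p"
  have "theta_coords c2 c3 q m = (if m = 0 then 0 else theta_coords c2 c3 p (m - 1))
       + (fcoef c2 c3 (int m) - \<beta>) * theta_coords c2 c3 p m"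
    unfolding q_def by (rule coords_mult_linear)
  then show ?thesis
    unfolding q_def[symmetric] by (cases m) (simp_all add: pc_def k nat_add_distrib)
qed (simp add: pc_def)

lemma pc_Lop:
  "pc c2 c3 (Lop c2 c3 a0 a1 a2 b0 b1 N q) k =
      (lam a0 b0 k - lam a0 b0 (int N)) * pc c2 c3 q k
    + k1 c2 c3 a0 a1 b0 b1 (k + 1) * pc c2 c3 q (k + 1)
    + k2 c2 c3 a0 a1 a2 b0 b1 (k + 2) * pc c2 c3 q (k + 2)"
proof (cases "k < 0")
  case True
  then consider "k = -1" | "k = -2" | "k < -2" by linarith
  then show ?thesis by cases (simp_all add: pc_def k1_def k2_def gcoef_def)
next
  case False
  then obtain m where "k = int m" by (metis nonneg_int_cases not_less)
  then show ?thesis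
    using coords_Lop[of c2 c3 a0 a1 a2 b0 b1 N q m] by (simp add: pc_def nat_add_distrib ac_simps)
qed

section \<open>The degree-lowering shift\<close>

lemma degree_Lop_le: "degree (Lop c2 c3 a0 a1 a2 b0 b1 N q) \<le> degree q"
  unfolding theta.degree_le_iff_coords[of _ _ c2 c3] by (simp add: coords_Lop theta.coords_eq_0)

context
  fixes c2 c3 a0 a1 a2 b0 b1 :: real and p :: "real poly" and n :: nat and \<beta> :: real
  assumes degree_p: "degree p = n" and monic_p: "lead_coeff p = 1"
begin

private lemma pc_top: "pc c2 c3 p (int n) = 1"
  and pc_above: "int n < k \<Longrightarrow> pc c2 c3 p k = 0"
proof -
  have "coeff p n = 1" using monic_p by (simp add: degree_p)
  then show "pc c2 c3 p (int n) = 1"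
    using theta.coords_degree[of c2 c3 p] by (simp add: pc_def degree_p)
  show "int n < k \<Longrightarrow> pc c2 c3 p k = 0"
    using theta.coords_eq_0[of p _ c2 c3] by (simp add: pc_def degree_p)
qed

lemma pc_Lop_mult_linear_Suc: "pc c2 c3 (Lop c2 c3 a0 a1 a2 b0 b1 (n + 1) ([:- \<beta>, 1:] * p)) (int n + 1) = 0"
  unfolding pc_Lop pc_mult_linear by (simp add: pc_above add.commute)

lemma pc_Lop_mult_linear_top:
  "pc c2 c3 (Lop c2 c3 a0 a1 a2 b0 b1 (n + 1) ([:- \<beta>, 1:] * p)) (int n) = k1 c2 c3 a0 a1 b0 b1 (int n + 1)
     + (pc c2 c3 p (int n - 1) + fcoef c2 c3 (int n) - \<beta>) * (lam a0 b0 (int n) - lam a0 b0 (int n + 1))"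
  unfolding pc_Lop pc_mult_linear by (simp add: pc_above pc_top algebra_simps)

lemma pc_Lop_mult_linear_subtop:
  "pc c2 c3 (Lop c2 c3 a0 a1 a2 b0 b1 (n + 1) ([:- \<beta>, 1:] * p)) (int n - 1) = k2 c2 c3 a0 a1 a2 b0 b1 (int n + 1)
     + (fcoef c2 c3 (int n) + pc c2 c3 p (int n - 1) - \<beta>) * k1 c2 c3 a0 a1 b0 b1 (int n)
     + (pc c2 c3 p (int n - 1) * fcoef c2 c3 (int n - 1) + pc c2 c3 p (int n - 2)
         - \<beta> * pc c2 c3 p (int n - 1)) * (lam a0 b0 (int n - 1) - lam a0 b0 (int n + 1))"
  unfolding pc_Lop pc_mult_linear by (simp add: pc_above pc_top algebra_simps)

lemma degree_Lop_mult_linear_le_iff: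
  assumes "n \<ge> 1" shows "degree (Lop c2 c3 a0 a1 a2 b0 b1 (n + 1) ([:- \<beta>, 1:] * p)) \<le> n - 1 \<longleftrightarrow> pc c2 c3 (Lop c2 c3 a0 a1 a2 b0 b1 (n + 1) ([:- \<beta>, 1:] * p)) (int n) = 0"
proof -
  have "degree (Lop c2 c3 a0 a1 a2 b0 b1 (n + 1) ([:- \<beta>, 1:] * p)) \<le> n + 1"
    using degree_Lop_le[of c2 c3 a0 a1 a2 b0 b1 "n + 1" "[:- \<beta>, 1:] * p"]
      degree_mult_le[of "[:- \<beta>, 1:]" p] by (simp add: degree_p)
  then have above: "theta_coords c2 c3 (Lop c2 c3 a0 a1 a2 b0 b1 (n + 1) ([:- \<beta>, 1:] * p)) k = 0" if "Suc n < k" for k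
    using that theta.coords_eq_0[of "Lop c2 c3 a0 a1 a2 b0 b1 (n + 1) ([:- \<beta>, 1:] * p)" k c2 c3] by simp
  have Suc_n: "theta_coords c2 c3 (Lop c2 c3 a0 a1 a2 b0 b1 (n + 1) ([:- \<beta>, 1:] * p)) (Suc n) = 0"
    using pc_Lop_mult_linear_Suc by (simp add: pc_def nat_add_distrib)
  have "(\<forall>k>n - 1. theta_coords c2 c3 (Lop c2 c3 a0 a1 a2 b0 b1 (n + 1) ([:- \<beta>, 1:] * p)) k = 0) \<longleftrightarrow> theta_coords c2 c3 (Lop c2 c3 a0 a1 a2 b0 b1 (n + 1) ([:- \<beta>, 1:] * p)) n = 0"
  proof
    assume "theta_coords c2 c3 (Lop c2 c3 a0 a1 a2 b0 b1 (n + 1) ([:- \<beta>, 1:] * p)) n = 0"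
    moreover have "k = n \<or> k = Suc n \<or> Suc n < k" if "n - 1 < k" for k
      using that assms by linarith
    ultimately show "\<forall>k>n - 1. theta_coords c2 c3 (Lop c2 c3 a0 a1 a2 b0 b1 (n + 1) ([:- \<beta>, 1:] * p)) k = 0"
      using above Suc_n by blast
  qed (use assms in simp)
  then show ?thesis
    unfolding theta.degree_le_iff_coords[of _ _ c2 c3] by (simp add: pc_def)
qed

end

text \<open>If two consecutive eigenvalues coincided, P n + P (n + 1) would be a second monic
  eigenpolynomial of degree n + 1.\<close>
lemma lam_Suc_neq:
  fixes P :: "nat \<Rightarrow> real poly"
  assumes P_monic: "\<And>n. lead_coeff (P n) = 1"
    and P_deg: "\<And>n. degree (P n) = n"
    and P_eig: "\<And>n. Lop c2 c3 a0 a1 a2 b0 b1 n (P n) = 0"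
    and P_unique: "\<And>n q. lead_coeff q = 1 \<Longrightarrow> degree q = n \<Longrightarrow>
                      Lop c2 c3 a0 a1 a2 b0 b1 n q = 0 \<Longrightarrow> q = P n"
  shows "lam a0 b0 (int n) \<noteq> lam a0 b0 (int n + 1)"
proof
  assume lam_eq: "lam a0 b0 (int n) = lam a0 b0 (int n + 1)"
  define q where "q = P n + P (Suc n)"
  have degree_q: "degree q = Suc n"
    unfolding q_def using P_deg by (simp add: degree_add_eq_right)
  have "lead_coeff q = 1"
    using P_monic[of "Suc n"] P_deg[of n] P_deg[of "Suc n"] degree_q by (simp add: q_def coeff_eq_0)
  moreover note degree_q
  moreover have "Lop c2 c3 a0 a1 a2 b0 b1 (Suc n) (P n) = 0"
    using Lop_shift[of c2 c3 a0 a1 a2 b0 b1 "Suc n" "P n" n] P_eig[of n] lam_eq by (simp add: add.commute)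
  then have "Lop c2 c3 a0 a1 a2 b0 b1 (Suc n) q = 0"
    using P_eig[of "Suc n"] by (simp add: q_def Lop_add)
  ultimately have "q = P (Suc n)" by (rule P_unique)
  then show False
    using P_monic[of n] by (simp add: q_def)
qed

theorem lemma4p2:
  fixes c2 c3 a0 a1 a2 b0 b1 :: real and P :: "nat \<Rightarrow> real poly"
  assumes P_monic: "\<And>n. lead_coeff (P n) = 1"
    and P_deg: "\<And>n. degree (P n) = n"
    and P_eig: "\<And>n. Lop c2 c3 a0 a1 a2 b0 b1 n (P n) = 0"
    and P_unique: "\<And>n q. lead_coeff q = 1 \<Longrightarrow> degree q = n \<Longrightarrow>
                      Lop c2 c3 a0 a1 a2 b0 b1 n q = 0 \<Longrightarrow> q = P n"
    and n_pos: "n \<ge> 1"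
  shows "(\<exists>\<beta>. degree (Lop c2 c3 a0 a1 a2 b0 b1 (n + 1) ([:- \<beta>, 1:] * P n)) \<le> n - 1)
    \<and> (\<forall>\<beta>. degree (Lop c2 c3 a0 a1 a2 b0 b1 (n + 1) ([:- \<beta>, 1:] * P n)) \<le> n - 1 \<longrightarrow>
         \<beta> = pc c2 c3 (P n) (int n - 1) + fcoef c2 c3 (int n)
               + k1 c2 c3 a0 a1 b0 b1 (int n + 1) / (lam a0 b0 (int n) - lam a0 b0 (int n + 1))
       \<and> pc c2 c3 (Lop c2 c3 a0 a1 a2 b0 b1 (n + 1) ([:- \<beta>, 1:] * P n)) (int n - 1)
           = k2 c2 c3 a0 a1 a2 b0 b1 (int n + 1)
             + (fcoef c2 c3 (int n) + pc c2 c3 (P n) (int n - 1) - \<beta>) * k1 c2 c3 a0 a1 b0 b1 (int n)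
             + (pc c2 c3 (P n) (int n - 1) * fcoef c2 c3 (int n - 1) + pc c2 c3 (P n) (int n - 2)
                 - \<beta> * pc c2 c3 (P n) (int n - 1))
               * (lam a0 b0 (int n - 1) - lam a0 b0 (int n + 1)))"
proof -
  define p1 where "p1 = pc c2 c3 (P n) (int n - 1)"
  define d where "d = lam a0 b0 (int n) - lam a0 b0 (int n + 1)"
  define \<beta>\<^sub>0 where "\<beta>\<^sub>0 = p1 + fcoef c2 c3 (int n) + k1 c2 c3 a0 a1 b0 b1 (int n + 1) / d"
  have "lam a0 b0 (int n) \<noteq> lam a0 b0 (int n + 1)"
    by (rule lam_Suc_neq[OF P_monic P_deg P_eig P_unique])
  then have "d \<noteq> 0" by (simp add: d_def)
  have degree_iff: "degree (Lop c2 c3 a0 a1 a2 b0 b1 (n + 1) ([:- \<beta>, 1:] * P n)) \<le> n - 1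
      \<longleftrightarrow> k1 c2 c3 a0 a1 b0 b1 (int n + 1) + (p1 + fcoef c2 c3 (int n) - \<beta>) * d = 0" for \<beta>
    using degree_Lop_mult_linear_le_iff[OF P_deg P_monic n_pos, where \<beta> = \<beta>]
      pc_Lop_mult_linear_top[OF P_deg P_monic, where \<beta> = \<beta>]
    unfolding p1_def d_def by (simp only:)
  have root_iff: "k1 c2 c3 a0 a1 b0 b1 (int n + 1) + (p1 + fcoef c2 c3 (int n) - \<beta>) * d = 0
      \<longleftrightarrow> \<beta> = \<beta>\<^sub>0" for \<beta>
    using \<open>d \<noteq> 0\<close> unfolding \<beta>\<^sub>0_def by (auto simp: field_simps)
  show ?thesis
    unfolding p1_def[symmetric] d_def[symmetric] \<beta>\<^sub>0_def[symmetric]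
  proof (intro conjI allI impI exI)
    show "degree (Lop c2 c3 a0 a1 a2 b0 b1 (n + 1) ([:- \<beta>\<^sub>0, 1:] * P n)) \<le> n - 1"
      using degree_iff root_iff by simp
  next
    fix \<beta> assume "degree (Lop c2 c3 a0 a1 a2 b0 b1 (n + 1) ([:- \<beta>, 1:] * P n)) \<le> n - 1"
    then show "\<beta> = \<beta>\<^sub>0" using degree_iff root_iff by simp
  qed (unfold p1_def, rule pc_Lop_mult_linear_subtop[OF P_deg P_monic])
qed

end
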